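(* Let $\Sigma$ be a set of prime numbers, $S$ the multiplicative submonoid of $\mathbb{N}$ generated by $\Sigma$, $\mathbb{Z}[S^{-1}]\subset\mathbb{Q}$ the localization. Let $M$ be a locally compact topological $\mathbb{Z}[S^{-1}]$-module that contains a compact open subgroup and is compactly generated. Then $M\cong(\mathbb{Z}[S^{-1}])^k\times C(M)$ as topological $\mathbb{Z}[S^{-1}]$-modules for some $k\ge 0$, where $(\mathbb{Z}[S^{-1}])^k$ is discrete.
   Context: All topological groups are Hausdorff; $\mathbb{Z}[S^{-1}]$ is discrete; scalar multiplication is continuous. Compactly generated means generated as a $\mathbb{Z}[S^{-1}]$-module by a compact subset. $C(M)$ is the set of elements $x\in M$ such that the closure of the subgroup generated by $x$ is compact (a closed submodule). *)

theory Defs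
  imports "HOL-Analysis.Analysis" "HOL-Computational_Algebra.Primes"
begin

inductive_set gen_monoid :: "nat set \<Rightarrow> nat set" for \<Sigma> :: "nat set" where
  one: "1 \<in> gen_monoid \<Sigma>"
| mult: "s \<in> gen_monoid \<Sigma> \<Longrightarrow> p \<in> \<Sigma> \<Longrightarrow> s * p \<in> gen_monoid \<Sigma>"

definition ZS :: "nat set \<Rightarrow> rat set" where
  "ZS \<Sigma> = {of_int a / of_nat s | a s. s \<in> gen_monoid \<Sigma>}"

(* a Hausdorff topological Z[S^-1]-module structure on the type 'm, with scalar action smul
   (only scalars in ZS matter) *)
definition top_ZS_module :: "nat set \<Rightarrow> (rat \<Rightarrow> 'm::{ab_group_add,t2_space} \<Rightarrow> 'm) \<Rightarrow> bool" where
  "top_ZS_module \<Sigma> smul \<longleftrightarrow>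
     (\<forall>q\<in>ZS \<Sigma>. \<forall>x y. smul q (x + y) = smul q x + smul q y) \<and>
     (\<forall>q\<in>ZS \<Sigma>. \<forall>r\<in>ZS \<Sigma>. \<forall>x. smul (q + r) x = smul q x + smul r x) \<and>
     (\<forall>q\<in>ZS \<Sigma>. \<forall>r\<in>ZS \<Sigma>. \<forall>x. smul (q * r) x = smul q (smul r x)) \<and>
     (\<forall>x. smul 1 x = x) \<and>
     continuous_on UNIV (\<lambda>p::'m \<times> 'm. fst p + snd p) \<and>
     continuous_on UNIV (\<lambda>x::'m. - x) \<and>
     (\<forall>q\<in>ZS \<Sigma>. continuous_on UNIV (smul q))"

definition is_subgroup :: "'m::ab_group_add set \<Rightarrow> bool" where
  "is_subgroup U \<longleftrightarrow> 0 \<in> U \<and> (\<forall>x\<in>U. \<forall>y\<in>U. x + y \<in> U) \<and> (\<forall>x\<in>U. - x \<in> U)"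

definition is_submodule :: "nat set \<Rightarrow> (rat \<Rightarrow> 'm::ab_group_add \<Rightarrow> 'm) \<Rightarrow> 'm set \<Rightarrow> bool" where
  "is_submodule \<Sigma> smul N \<longleftrightarrow> is_subgroup N \<and> (\<forall>q\<in>ZS \<Sigma>. \<forall>x\<in>N. smul q x \<in> N)"

definition gen_submodule :: "nat set \<Rightarrow> (rat \<Rightarrow> 'm::ab_group_add \<Rightarrow> 'm) \<Rightarrow> 'm set \<Rightarrow> 'm set" where
  "gen_submodule \<Sigma> smul K = \<Inter>{N. is_submodule \<Sigma> smul N \<and> K \<subseteq> N}"

definition compactly_generated :: "nat set \<Rightarrow> (rat \<Rightarrow> 'm::{ab_group_add,topological_space} \<Rightarrow> 'm) \<Rightarrow> bool" where
  "compactly_generated \<Sigma> smul \<longleftrightarrow> (\<exists>K. compact K \<and> gen_submodule \<Sigma> smul K = UNIV)"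

definition Cpart :: "(rat \<Rightarrow> 'm::{ab_group_add,topological_space} \<Rightarrow> 'm) \<Rightarrow> 'm set" where
  "Cpart smul = {x. compact (closure (range (\<lambda>n::int. smul (of_int n) x)))}"

definition ZS_pow :: "nat set \<Rightarrow> nat \<Rightarrow> (nat \<Rightarrow> rat) set" where
  "ZS_pow \<Sigma> k = {v. (\<forall>i<k. v i \<in> ZS \<Sigma>) \<and> (\<forall>i\<ge>k. v i = 0)}"

end

(*
  C(M) is a submodule; it is saturated (if the multiples of N x have compact closure, then the multiples
  of x lie in N translates of that compact set) and open (it contains the compact open subgroup U, hence is
  a union of cosets of U). Covering the compact generating set by finitely many cosets of C(M) shows that
  M/C(M) is finitely generated, and being torsion-free over the principal ideal domain Z[S^-1] it is free.
  Freeness of M/C, for any saturated submodule C, is proved by induction on the number of generators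
  g_0, ..., g_m: if B is the saturation of C + Z g_m, then M/B is free by induction, B/C is a direct summand of M/C and hence finitely generated,
  and having rank one it is cyclic (Bezout), so a basis of M/B extends by one element to a basis of M/C.
  A basis e of M/C(M) gives the linear map x |-> (v, x - sum v_i e_i), v the coordinates of x; the fibres
  of the coordinate map are cosets of the open set C(M), so this is a homeomorphism onto the product of
  the discrete module Z[S^-1]^k and C(M).
*)
theory Submission
  imports Defs
begin

section \<open>The ring \<open>\<int>[S\<inverse>]\<close>\<close>

lemma gen_monoid_pos: "s \<in> gen_monoid \<Sigma> \<Longrightarrow> 0 \<notin> \<Sigma> \<Longrightarrow> 0 < s"
  by (induction s rule: gen_monoid.induct) (auto intro: Nat.gr0I)

lemma gen_monoid_mult: "t \<in> gen_monoid \<Sigma> \<Longrightarrow> s \<in> gen_monoid \<Sigma> \<Longrightarrow> s * t \<in> gen_monoid \<Sigma>"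
  by (induction t rule: gen_monoid.induct) (auto simp: mult.assoc[symmetric] intro: gen_monoid.mult)

lemma of_int_in_ZS [simp]: "of_int a \<in> ZS \<Sigma>"
  unfolding ZS_def using gen_monoid.one by force

lemma zero_in_ZS [simp]: "0 \<in> ZS \<Sigma>" and one_in_ZS [simp]: "1 \<in> ZS \<Sigma>"
  using of_int_in_ZS[of 0 \<Sigma>] of_int_in_ZS[of 1 \<Sigma>] by simp_all

lemma ZS_cases:
  assumes "q \<in> ZS \<Sigma>" "0 \<notin> \<Sigma>"
  obtains a s where "s \<in> gen_monoid \<Sigma>" "0 < s" "q = of_int a / of_nat s"
  using assms gen_monoid_pos unfolding ZS_def by blast

lemma ZS_add:
  assumes "0 \<notin> \<Sigma>" "q \<in> ZS \<Sigma>" "r \<in> ZS \<Sigma>"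
  shows "q + r \<in> ZS \<Sigma>"
proof -
  obtain a s where "s \<in> gen_monoid \<Sigma>" "0 < s" "q = of_int a / of_nat s"
    using ZS_cases assms(1,2) by metis
  moreover obtain b t where "t \<in> gen_monoid \<Sigma>" "0 < t" "r = of_int b / of_nat t"
    using ZS_cases assms(1,3) by metis
  ultimately have "q + r = of_int (a * int t + b * int s) / of_nat (s * t)"
    and "s * t \<in> gen_monoid \<Sigma>"
    by (simp_all add: field_simps gen_monoid_mult)
  then show ?thesis unfolding ZS_def by blast
qed

lemma ZS_mult:
  assumes "0 \<notin> \<Sigma>" "q \<in> ZS \<Sigma>" "r \<in> ZS \<Sigma>"
  shows "q * r \<in> ZS \<Sigma>"
proof -
  obtain a s where "s \<in> gen_monoid \<Sigma>" "0 < s" "q = of_int a / of_nat s"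
    using ZS_cases assms(1,2) by metis
  moreover obtain b t where "t \<in> gen_monoid \<Sigma>" "0 < t" "r = of_int b / of_nat t"
    using ZS_cases assms(1,3) by metis
  ultimately have "q * r = of_int (a * b) / of_nat (s * t)" and "s * t \<in> gen_monoid \<Sigma>"
    by (simp_all add: gen_monoid_mult)
  then show ?thesis unfolding ZS_def by blast
qed

lemma ZS_uminus: "q \<in> ZS \<Sigma> \<Longrightarrow> - q \<in> ZS \<Sigma>"
  unfolding ZS_def by (force intro: exI[of _ "- _"])

lemma ZS_diff: "0 \<notin> \<Sigma> \<Longrightarrow> q \<in> ZS \<Sigma> \<Longrightarrow> r \<in> ZS \<Sigma> \<Longrightarrow> q - r \<in> ZS \<Sigma>"
  using ZS_add[of \<Sigma> q "- r"] ZS_uminus[of r] by simp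

lemma ZS_sum: "0 \<notin> \<Sigma> \<Longrightarrow> (\<And>i. i \<in> I \<Longrightarrow> f i \<in> ZS \<Sigma>) \<Longrightarrow> sum f I \<in> ZS \<Sigma>"
  by (induction I rule: infinite_finite_induct) (auto intro: ZS_add)

lemma ZS_clear_denominator:
  assumes "q \<in> ZS \<Sigma>" "0 \<notin> \<Sigma>"
  obtains s a :: int where "0 < s" "of_int s * q = of_int a"
proof -
  obtain a s where "0 < s" "q = of_int a / of_nat s" using ZS_cases assms by metis
  then show ?thesis using that[of "int s" a] by simp
qed

section \<open>\<open>\<int>[S\<inverse>]\<close>-modules\<close>

locale ZS_module =
  fixes \<Sigma> :: "nat set" and smul :: "rat \<Rightarrow> 'm::ab_group_add \<Rightarrow> 'm"
  assumes zero_notin_\<Sigma>: "0 \<notin> \<Sigma>"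
    and smul_add_right: "q \<in> ZS \<Sigma> \<Longrightarrow> smul q (x + y) = smul q x + smul q y"
    and smul_add_left: "q \<in> ZS \<Sigma> \<Longrightarrow> r \<in> ZS \<Sigma> \<Longrightarrow> smul (q + r) x = smul q x + smul r x"
    and smul_smul: "q \<in> ZS \<Sigma> \<Longrightarrow> r \<in> ZS \<Sigma> \<Longrightarrow> smul q (smul r x) = smul (q * r) x"
    and smul_one [simp]: "smul 1 x = x"
begin

lemma ZS_closed [intro]:
  "q \<in> ZS \<Sigma> \<Longrightarrow> r \<in> ZS \<Sigma> \<Longrightarrow> q + r \<in> ZS \<Sigma>"
  "q \<in> ZS \<Sigma> \<Longrightarrow> r \<in> ZS \<Sigma> \<Longrightarrow> q * r \<in> ZS \<Sigma>"
  "q \<in> ZS \<Sigma> \<Longrightarrow> r \<in> ZS \<Sigma> \<Longrightarrow> q - r \<in> ZS \<Sigma>"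
  "q \<in> ZS \<Sigma> \<Longrightarrow> - q \<in> ZS \<Sigma>"
  "(\<And>i. i \<in> I \<Longrightarrow> f i \<in> ZS \<Sigma>) \<Longrightarrow> sum f I \<in> ZS \<Sigma>"
  using zero_notin_\<Sigma> by (auto intro: ZS_add ZS_mult ZS_diff ZS_uminus ZS_sum)

lemma smul_zero_left [simp]: "smul 0 x = 0"
  using smul_add_left[of 0 0 x] by simp

lemma smul_zero_right [simp]: "q \<in> ZS \<Sigma> \<Longrightarrow> smul q 0 = 0"
  using smul_add_right[of q 0 0] by simp

lemma smul_minus_right: "q \<in> ZS \<Sigma> \<Longrightarrow> smul q (- x) = - smul q x"
  using smul_add_right[of q x "- x"] by (simp add: eq_neg_iff_add_eq_0 add.commute)

lemma smul_diff_right: "q \<in> ZS \<Sigma> \<Longrightarrow> smul q (x - y) = smul q x - smul q y"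
  using smul_add_right[of q x "- y"] by (simp add: smul_minus_right)

lemma smul_minus_left: "q \<in> ZS \<Sigma> \<Longrightarrow> smul (- q) x = - smul q x"
  using smul_add_left[of q "- q" x] by (auto simp: eq_neg_iff_add_eq_0 add.commute)

lemma smul_diff_left: "q \<in> ZS \<Sigma> \<Longrightarrow> r \<in> ZS \<Sigma> \<Longrightarrow> smul (q - r) x = smul q x - smul r x"
  using smul_add_left[of q "- r" x] by (auto simp: smul_minus_left)

lemma smul_sum_right: "q \<in> ZS \<Sigma> \<Longrightarrow> smul q (sum f I) = (\<Sum>i\<in>I. smul q (f i))"
  by (induction I rule: infinite_finite_induct) (auto simp: smul_add_right)

lemma smul_sum_left: "(\<And>i. i \<in> I \<Longrightarrow> f i \<in> ZS \<Sigma>) \<Longrightarrow> smul (sum f I) x = (\<Sum>i\<in>I. smul (f i) x)"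
  by (induction I rule: infinite_finite_induct) (auto simp: smul_add_left ZS_closed)

definition zmul :: "int \<Rightarrow> 'm \<Rightarrow> 'm" where
  "zmul n x = smul (of_int n) x"

lemma zmul_add_left: "zmul (a + b) x = zmul a x + zmul b x"
  and zmul_add_right: "zmul a (x + y) = zmul a x + zmul a y"
  and zmul_diff_left: "zmul (a - b) x = zmul a x - zmul b x"
  and zmul_diff_right: "zmul a (x - y) = zmul a x - zmul a y"
  and zmul_minus_left: "zmul (- a) x = - zmul a x"
  and zmul_minus_right: "zmul a (- x) = - zmul a x"
  and zmul_zmul: "zmul a (zmul b x) = zmul (a * b) x"
  unfolding zmul_def
  by (simp_all add: smul_add_left smul_add_right smul_diff_left smul_diff_right
      smul_minus_left smul_minus_right smul_smul)

lemmas zmul_simps = zmul_add_left zmul_add_right zmul_diff_left zmul_diff_right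
  zmul_minus_left zmul_minus_right zmul_zmul

lemma zmul_one [simp]: "zmul 1 x = x"
  and zmul_zero_left [simp]: "zmul 0 x = 0"
  and zmul_zero_right [simp]: "zmul a 0 = 0"
  by (simp_all add: zmul_def)

abbreviation submodule :: "'m set \<Rightarrow> bool" where
  "submodule C \<equiv> is_submodule \<Sigma> smul C"

lemma submodule_zero: "submodule C \<Longrightarrow> 0 \<in> C"
  and submodule_add: "submodule C \<Longrightarrow> x \<in> C \<Longrightarrow> y \<in> C \<Longrightarrow> x + y \<in> C"
  and submodule_uminus: "submodule C \<Longrightarrow> x \<in> C \<Longrightarrow> - x \<in> C"
  and submodule_smul: "submodule C \<Longrightarrow> q \<in> ZS \<Sigma> \<Longrightarrow> x \<in> C \<Longrightarrow> smul q x \<in> C"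
  unfolding is_submodule_def is_subgroup_def by blast+

lemma submoduleI:
  assumes "0 \<in> C" "\<And>x y. x \<in> C \<Longrightarrow> y \<in> C \<Longrightarrow> x + y \<in> C"
    and "\<And>q x. q \<in> ZS \<Sigma> \<Longrightarrow> x \<in> C \<Longrightarrow> smul q x \<in> C"
  shows "submodule C"
proof -
  have "- x \<in> C" if "x \<in> C" for x
    using assms(3)[OF _ that, of "- 1"] by (simp add: smul_minus_left ZS_closed)
  with assms show ?thesis unfolding is_submodule_def is_subgroup_def by blast
qed

lemma submodule_diff: "submodule C \<Longrightarrow> x \<in> C \<Longrightarrow> y \<in> C \<Longrightarrow> x - y \<in> C"
  using submodule_add[of C x "- y"] submodule_uminus by auto

lemma submodule_zmul: "submodule C \<Longrightarrow> x \<in> C \<Longrightarrow> zmul a x \<in> C"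
  unfolding zmul_def by (simp add: submodule_smul)

lemma submodule_sum: "submodule C \<Longrightarrow> (\<And>i. i \<in> I \<Longrightarrow> f i \<in> C) \<Longrightarrow> sum f I \<in> C"
  by (induction I rule: infinite_finite_induct) (auto intro: submodule_add submodule_zero)

definition saturated :: "'m set \<Rightarrow> bool" where
  "saturated C \<longleftrightarrow> (\<forall>n x. n \<noteq> 0 \<longrightarrow> zmul n x \<in> C \<longrightarrow> x \<in> C)"

lemma saturatedD: "saturated C \<Longrightarrow> n \<noteq> 0 \<Longrightarrow> zmul n x \<in> C \<Longrightarrow> x \<in> C"
  unfolding saturated_def by blast

lemma saturated_smul_cancel:
  assumes "submodule C" "saturated C" "q \<in> ZS \<Sigma>" "q \<noteq> 0" "smul q x \<in> C"
  shows "x \<in> C"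
proof -
  obtain s a :: int where s: "0 < s" "of_int s * q = of_int a"
    using ZS_clear_denominator assms(3) zero_notin_\<Sigma> by metis
  then have "zmul a x = smul (of_int s) (smul q x)"
    using assms(3) by (simp add: zmul_def smul_smul)
  then have "zmul a x \<in> C" using assms(1,5) by (simp add: submodule_smul)
  moreover have "a \<noteq> 0" using s assms(4) by auto
  ultimately show ?thesis using saturatedD assms(2) by blast
qed

lemma ZS_pow_iff: "v \<in> ZS_pow \<Sigma> k \<longleftrightarrow> (\<forall>i<k. v i \<in> ZS \<Sigma>) \<and> (\<forall>i\<ge>k. v i = 0)"
  unfolding ZS_pow_def by simp

lemma ZS_pow_closed [intro]:
  "(\<lambda>_. 0) \<in> ZS_pow \<Sigma> k"
  "v \<in> ZS_pow \<Sigma> k \<Longrightarrow> w \<in> ZS_pow \<Sigma> k \<Longrightarrow> (\<lambda>i. v i + w i) \<in> ZS_pow \<Sigma> k"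
  "v \<in> ZS_pow \<Sigma> k \<Longrightarrow> w \<in> ZS_pow \<Sigma> k \<Longrightarrow> (\<lambda>i. v i - w i) \<in> ZS_pow \<Sigma> k"
  "q \<in> ZS \<Sigma> \<Longrightarrow> v \<in> ZS_pow \<Sigma> k \<Longrightarrow> (\<lambda>i. q * v i) \<in> ZS_pow \<Sigma> k"
  "(\<And>i. i \<in> I \<Longrightarrow> a i \<in> ZS \<Sigma>) \<Longrightarrow> (\<And>i. i \<in> I \<Longrightarrow> V i \<in> ZS_pow \<Sigma> k) \<Longrightarrow>
     (\<lambda>j. \<Sum>i\<in>I. a i * V i j) \<in> ZS_pow \<Sigma> k"
  unfolding ZS_pow_iff by (auto intro!: ZS_closed)

definition lincomb :: "(nat \<Rightarrow> rat) \<Rightarrow> (nat \<Rightarrow> 'm) \<Rightarrow> nat \<Rightarrow> 'm" where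
  "lincomb v e k = (\<Sum>i<k. smul (v i) (e i))"

definition spans_mod :: "'m set \<Rightarrow> nat \<Rightarrow> (nat \<Rightarrow> 'm) \<Rightarrow> 'm set \<Rightarrow> bool" where
  "spans_mod C k e A \<longleftrightarrow> (\<forall>x\<in>A. \<exists>v\<in>ZS_pow \<Sigma> k. x - lincomb v e k \<in> C)"

definition independent_mod :: "'m set \<Rightarrow> nat \<Rightarrow> (nat \<Rightarrow> 'm) \<Rightarrow> bool" where
  "independent_mod C k e \<longleftrightarrow> (\<forall>v\<in>ZS_pow \<Sigma> k. lincomb v e k \<in> C \<longrightarrow> v = (\<lambda>_. 0))"

lemma lincomb_cong:
  "(\<And>i. i < k \<Longrightarrow> v i = w i) \<Longrightarrow> (\<And>i. i < k \<Longrightarrow> e i = f i) \<Longrightarrow> lincomb v e k = lincomb w f k"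
  unfolding lincomb_def by (rule sum.cong) auto

lemma lincomb_zero_coeffs [simp]: "lincomb (\<lambda>_. 0) e k = 0"
  unfolding lincomb_def by simp

lemma lincomb_Suc: "lincomb v e (Suc k) = lincomb v e k + smul (v k) (e k)"
  unfolding lincomb_def by simp

lemma lincomb_in_submodule:
  "submodule C \<Longrightarrow> v \<in> ZS_pow \<Sigma> k \<Longrightarrow> (\<And>i. i < k \<Longrightarrow> e i \<in> C) \<Longrightarrow> lincomb v e k \<in> C"
  unfolding lincomb_def ZS_pow_iff by (auto intro!: submodule_sum submodule_smul)

lemma lincomb_add:
  "v \<in> ZS_pow \<Sigma> k \<Longrightarrow> w \<in> ZS_pow \<Sigma> k \<Longrightarrow>
    lincomb (\<lambda>i. v i + w i) e k = lincomb v e k + lincomb w e k"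
  unfolding lincomb_def ZS_pow_iff by (simp add: smul_add_left sum.distrib)

lemma lincomb_diff:
  "v \<in> ZS_pow \<Sigma> k \<Longrightarrow> w \<in> ZS_pow \<Sigma> k \<Longrightarrow>
    lincomb (\<lambda>i. v i - w i) e k = lincomb v e k - lincomb w e k"
  unfolding lincomb_def ZS_pow_iff by (simp add: smul_diff_left sum_subtractf)

lemma lincomb_smul:
  "q \<in> ZS \<Sigma> \<Longrightarrow> v \<in> ZS_pow \<Sigma> k \<Longrightarrow> smul q (lincomb v e k) = lincomb (\<lambda>i. q * v i) e k"
  unfolding lincomb_def ZS_pow_iff by (simp add: smul_sum_right smul_smul)

lemma lincomb_diff_right:
  "v \<in> ZS_pow \<Sigma> k \<Longrightarrow> lincomb v (\<lambda>i. x i - y i) k = lincomb v x k - lincomb v y k"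
  unfolding lincomb_def ZS_pow_iff by (simp add: smul_diff_right sum_subtractf)

lemma lincomb_smul_const:
  assumes "v \<in> ZS_pow \<Sigma> k" "\<And>i. i < k \<Longrightarrow> w i \<in> ZS \<Sigma>"
  shows "lincomb v (\<lambda>i. smul (w i) x) k = smul (\<Sum>i<k. v i * w i) x"
  using assms unfolding lincomb_def ZS_pow_iff
  by (subst smul_sum_left) (auto simp: smul_smul intro!: sum.cong)

lemma lincomb_lincomb:
  assumes "v \<in> ZS_pow \<Sigma> m" "\<And>i. i < m \<Longrightarrow> V i \<in> ZS_pow \<Sigma> k"
  shows "lincomb v (\<lambda>i. lincomb (V i) e k) m = lincomb (\<lambda>j. \<Sum>i<m. v i * V i j) e k"
proof -
  have "lincomb v (\<lambda>i. lincomb (V i) e k) m = (\<Sum>i<m. \<Sum>j<k. smul (v i * V i j) (e j))"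
    using assms unfolding lincomb_def ZS_pow_iff by (simp add: smul_sum_right smul_smul)
  also have "\<dots> = (\<Sum>j<k. \<Sum>i<m. smul (v i * V i j) (e j))"
    by (rule sum.swap)
  also have "\<dots> = lincomb (\<lambda>j. \<Sum>i<m. v i * V i j) e k"
    using assms unfolding lincomb_def ZS_pow_iff
    by (intro sum.cong refl, subst smul_sum_left) (auto intro!: ZS_closed)
  finally show ?thesis .
qed

lemma submodule_span_mod:
  assumes "submodule C"
  shows "submodule {x. \<exists>v\<in>ZS_pow \<Sigma> k. x - lincomb v e k \<in> C}"
proof (rule submoduleI; clarsimp)
  show "\<exists>v\<in>ZS_pow \<Sigma> k. - lincomb v e k \<in> C"
    using assms by (auto intro!: bexI[of _ "\<lambda>_. 0"] submodule_zero)
next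
  fix x y v w assume "v \<in> ZS_pow \<Sigma> k" "x - lincomb v e k \<in> C" "w \<in> ZS_pow \<Sigma> k" "y - lincomb w e k \<in> C"
  moreover have "x + y - lincomb (\<lambda>i. v i + w i) e k = (x - lincomb v e k) + (y - lincomb w e k)"
    using \<open>v \<in> ZS_pow \<Sigma> k\<close> \<open>w \<in> ZS_pow \<Sigma> k\<close> by (simp add: lincomb_add)
  ultimately show "\<exists>u\<in>ZS_pow \<Sigma> k. x + y - lincomb u e k \<in> C"
    using submodule_add[OF assms] by (metis ZS_pow_closed(2))
next
  fix q x v assume "q \<in> ZS \<Sigma>" "v \<in> ZS_pow \<Sigma> k" "x - lincomb v e k \<in> C"
  then show "\<exists>u\<in>ZS_pow \<Sigma> k. smul q x - lincomb u e k \<in> C"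
    using submodule_smul[OF assms]
    by (intro bexI[of _ "\<lambda>i. q * v i"]) (auto simp: lincomb_smul[symmetric] smul_diff_right[symmetric])
qed

lemma independent_mod_unique:
  assumes "submodule C" "independent_mod C k e" "v \<in> ZS_pow \<Sigma> k" "w \<in> ZS_pow \<Sigma> k"
    and "x - lincomb v e k \<in> C" "x - lincomb w e k \<in> C"
  shows "v = w"
proof -
  have "lincomb (\<lambda>i. v i - w i) e k = (x - lincomb w e k) - (x - lincomb v e k)"
    using assms(3,4) by (simp add: lincomb_diff)
  then have "lincomb (\<lambda>i. v i - w i) e k \<in> C"
    using submodule_diff[OF assms(1,6,5)] by simp
  then have "(\<lambda>i. v i - w i) = (\<lambda>_. 0)"
    using assms(2-4) unfolding independent_mod_def by blast
  then show ?thesis by (simp add: fun_eq_iff)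
qed

definition saturation :: "'m set \<Rightarrow> 'm \<Rightarrow> 'm set" where
  "saturation C g = {x. \<exists>n a. n \<noteq> 0 \<and> zmul n x - zmul a g \<in> C}"

lemma saturationI: "n \<noteq> 0 \<Longrightarrow> zmul n x - zmul a g \<in> C \<Longrightarrow> x \<in> saturation C g"
  unfolding saturation_def by blast

lemma saturationE:
  assumes "x \<in> saturation C g"
  obtains n a where "n \<noteq> 0" "zmul n x - zmul a g \<in> C"
  using assms unfolding saturation_def by blast

lemma subset_saturation: "submodule C \<Longrightarrow> C \<subseteq> saturation C g"
  by (auto intro: saturationI[of 1 _ 0])

lemma generator_in_saturation: "submodule C \<Longrightarrow> g \<in> saturation C g"
  by (rule saturationI[of 1 _ 1]) (simp_all add: submodule_zero)

lemma submodule_saturation: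
  assumes C: "submodule C"
  shows "submodule (saturation C g)"
proof (rule submoduleI)
  show "0 \<in> saturation C g"
    using subset_saturation[OF C] submodule_zero[OF C] by blast
next
  fix x y assume "x \<in> saturation C g" "y \<in> saturation C g"
  then obtain n a m b where nm: "n \<noteq> 0" "zmul n x - zmul a g \<in> C" "m \<noteq> 0" "zmul m y - zmul b g \<in> C"
    by (meson saturationE)
  then have "zmul m (zmul n x - zmul a g) + zmul n (zmul m y - zmul b g) \<in> C"
    using C by (intro submodule_add submodule_zmul)
  moreover have "zmul m (zmul n x - zmul a g) + zmul n (zmul m y - zmul b g) =
      zmul (n * m) (x + y) - zmul (m * a + n * b) g"
    by (simp add: zmul_simps algebra_simps)
  ultimately show "x + y \<in> saturation C g"
    using nm by (intro saturationI[of "n * m"]) auto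
next
  fix q x assume q: "q \<in> ZS \<Sigma>" and "x \<in> saturation C g"
  then obtain n a where n: "n \<noteq> 0" "zmul n x - zmul a g \<in> C"
    by (meson saturationE)
  obtain s b :: int where s: "0 < s" "of_int s * q = of_int b"
    using ZS_clear_denominator q zero_notin_\<Sigma> by metis
  have "zmul (n * s) (smul q x) = zmul n (zmul b x)"
    using q s by (simp add: zmul_def smul_smul mult.assoc ZS_closed)
  then have "zmul b (zmul n x - zmul a g) = zmul (n * s) (smul q x) - zmul (b * a) g"
    by (simp add: zmul_simps algebra_simps)
  then show "smul q x \<in> saturation C g"
    using n s submodule_zmul[OF C n(2), of b] by (intro saturationI[of "n * s"]) auto
qed

lemma saturated_saturation: "saturated (saturation C g)"
  unfolding saturated_def
proof (intro allI impI)
  fix n x assume "n \<noteq> 0" "zmul n x \<in> saturation C g"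
  then obtain m a where "m \<noteq> 0" "zmul (m * n) x - zmul a g \<in> C"
    by (auto elim: saturationE simp: zmul_zmul)
  then show "x \<in> saturation C g"
    using \<open>n \<noteq> 0\<close> by (intro saturationI[of "m * n" _ a]) auto
qed

lemma saturation_common_multiple:
  assumes C: "submodule C" and "x \<in> saturation C g" "y \<in> saturation C g"
  obtains D a b where "D \<noteq> 0" "zmul D x - zmul a g \<in> C" "zmul D y - zmul b g \<in> C"
proof -
  obtain n a where n: "n \<noteq> 0" "zmul n x - zmul a g \<in> C" using assms(2) by (rule saturationE)
  obtain m b where m: "m \<noteq> 0" "zmul m y - zmul b g \<in> C" using assms(3) by (rule saturationE)
  have "zmul (n * m) x - zmul (m * a) g \<in> C"
    using submodule_zmul[OF C n(2), of m] by (simp add: zmul_simps algebra_simps)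
  moreover have "zmul (n * m) y - zmul (n * b) g \<in> C"
    using submodule_zmul[OF C m(2), of n] by (simp add: zmul_simps algebra_simps)
  ultimately show ?thesis
    by (rule that[rotated]) (simp add: n(1) m(1))
qed

text \<open>If \<open>D x \<equiv> a g\<close> and \<open>D y \<equiv> b g\<close> modulo \<open>C\<close>, the common divisor is \<open>e = l x + l' y\<close>,
  where \<open>l a + l' b = gcd a b\<close>.\<close>
lemma saturation_pair:
  assumes C: "submodule C" "saturated C"
    and x: "x \<in> saturation C g" and y: "y \<in> saturation C g"
  shows "\<exists>e\<in>saturation C g. \<exists>t t'. x - zmul t e \<in> C \<and> y - zmul t' e \<in> C"
proof -
  obtain D a b where D: "D \<noteq> 0" and x': "zmul D x - zmul a g \<in> C" and y': "zmul D y - zmul b g \<in> C"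
    using saturation_common_multiple[OF C(1) x y] .
  define d where "d = gcd a b"
  obtain l l' where l: "l * a + l' * b = d"
    unfolding d_def using bezout_int by blast
  define e where "e = zmul l x + zmul l' y"
  have e: "e \<in> saturation C g"
    unfolding e_def using x y submodule_saturation[OF C(1)] by (auto intro: submodule_add submodule_zmul)
  have "zmul l (zmul D x - zmul a g) + zmul l' (zmul D y - zmul b g) \<in> C"
    using submodule_add[OF C(1) submodule_zmul[OF C(1) x'] submodule_zmul[OF C(1) y']] .
  moreover have "zmul l (zmul D x - zmul a g) + zmul l' (zmul D y - zmul b g) = zmul D e - zmul d g"
    unfolding e_def l[symmetric] by (simp add: zmul_simps algebra_simps)
  ultimately have De: "zmul D e - zmul d g \<in> C" by simp
  have reduce: "z - zmul t e \<in> C" if z: "zmul D z - zmul (d * t) g \<in> C" for z t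
  proof -
    have "zmul D (z - zmul t e) = (zmul D z - zmul (d * t) g) - zmul t (zmul D e - zmul d g)"
      by (simp add: zmul_simps algebra_simps)
    then have "zmul D (z - zmul t e) \<in> C"
      using submodule_diff[OF C(1) z submodule_zmul[OF C(1) De]] by simp
    then show ?thesis using saturatedD[OF C(2) D] by blast
  qed
  obtain t t' where "a = d * t" "b = d * t'"
    unfolding d_def by (meson dvdE gcd_dvd1 gcd_dvd2)
  then show ?thesis using reduce[of x t] reduce[of y t'] x' y' e by auto
qed

lemma saturation_finite_cyclic:
  fixes m :: nat
  assumes C: "submodule C" "saturated C"
  shows "(\<And>i. i < m \<Longrightarrow> b i \<in> saturation C g) \<Longrightarrow>
    \<exists>e\<in>saturation C g. \<exists>t. \<forall>i<m. b i - zmul (t i) e \<in> C"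
proof (induction m)
  case 0
  then show ?case using generator_in_saturation[OF C(1)] by blast
next
  case (Suc m)
  then obtain e t where e: "e \<in> saturation C g" "\<forall>i<m. b i - zmul (t i) e \<in> C"
    by auto
  obtain e' s s' where e': "e' \<in> saturation C g" "e - zmul s e' \<in> C" "b m - zmul s' e' \<in> C"
    using saturation_pair[OF C e(1) Suc.prems[of m]] by blast
  have "b i - zmul (t i * s) e' \<in> C" if "i < m" for i
  proof -
    have "(b i - zmul (t i) e) + zmul (t i) (e - zmul s e') \<in> C"
      using C(1) e(2) e'(2) \<open>i < m\<close> by (intro submodule_add submodule_zmul) auto
    moreover have "(b i - zmul (t i) e) + zmul (t i) (e - zmul s e') = b i - zmul (t i * s) e'"
      by (simp add: zmul_simps)
    ultimately show ?thesis by simp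
  qed
  moreover define t' where "t' = (\<lambda>i. if i = m then s' else t i * s)"
  ultimately have "\<forall>i<Suc m. b i - zmul (t' i) e' \<in> C"
    using e'(3) less_Suc_eq by auto
  with e'(1) show ?case by blast
qed

subsection \<open>Finitely generated torsion-free quotients are free\<close>

lemma ZS_pow_0: "ZS_pow \<Sigma> 0 = {\<lambda>_. 0}"
  by (auto simp: ZS_pow_iff)

lemma spans_mod_drop_last:
  assumes "spans_mod C (Suc m) g A" "submodule B" "C \<subseteq> B" "g m \<in> B"
  shows "spans_mod B m g A"
  unfolding spans_mod_def
proof
  fix x assume "x \<in> A"
  then obtain v where v: "v \<in> ZS_pow \<Sigma> (Suc m)" "x - lincomb v g (Suc m) \<in> C"
    using assms(1) unfolding spans_mod_def by blast
  have "v(m := 0) \<in> ZS_pow \<Sigma> m" using v(1) by (auto simp: ZS_pow_iff)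
  moreover have "x - lincomb (v(m := 0)) g m = (x - lincomb v g (Suc m)) + smul (v m) (g m)"
    by (simp add: lincomb_Suc lincomb_cong[of m "v(m := 0)" v])
  moreover have "(x - lincomb v g (Suc m)) + smul (v m) (g m) \<in> B"
    using v assms(2-4) by (intro submodule_add submodule_smul) (auto simp: ZS_pow_iff)
  ultimately show "\<exists>v\<in>ZS_pow \<Sigma> m. x - lincomb v g m \<in> B" by metis
qed

text \<open>If \<open>e\<close> is a basis of \<open>M/B\<close> and \<open>C \<subseteq> B\<close>, then \<open>B/C\<close> is a direct summand of \<open>M/C\<close>;
  its generators are the \<open>B\<close>-components of the generators of \<open>M/C\<close>.\<close>
lemma spans_mod_complement:
  assumes C: "submodule C" and B: "submodule B" "C \<subseteq> B"
    and g: "spans_mod C m g UNIV"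
    and e: "spans_mod B k e UNIV" "independent_mod B k e"
  shows "\<exists>b. (\<forall>i<m. b i \<in> B) \<and> spans_mod C m b B"
proof -
  have "\<forall>x. \<exists>v. v \<in> ZS_pow \<Sigma> k \<and> x - lincomb v e k \<in> B"
    using e(1) unfolding spans_mod_def by blast
  then obtain V where V: "\<And>x. V x \<in> ZS_pow \<Sigma> k \<and> x - lincomb (V x) e k \<in> B"
    by metis
  define b where "b = (\<lambda>i. g i - lincomb (V (g i)) e k)"
  have b: "b i \<in> B" for i using V by (simp add: b_def)
  have "spans_mod C m b B"
    unfolding spans_mod_def
  proof
    fix x assume x: "x \<in> B"
    obtain v where v: "v \<in> ZS_pow \<Sigma> m" "x - lincomb v g m \<in> C"
      using g unfolding spans_mod_def by blast
    define W where "W = (\<lambda>j. \<Sum>i<m. v i * V (g i) j)"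
    have W: "W \<in> ZS_pow \<Sigma> k"
      unfolding W_def using v(1) V by (intro ZS_pow_closed(5)) (auto simp: ZS_pow_iff)
    have "lincomb v b m = lincomb v g m - lincomb W e k"
      unfolding b_def W_def using v(1) V by (simp add: lincomb_diff_right lincomb_lincomb)
    then have W_eq: "lincomb W e k = (x - lincomb v b m) - (x - lincomb v g m)"
      by simp
    have "x - lincomb v b m \<in> B"
      using submodule_diff[OF B(1) x lincomb_in_submodule[OF B(1) v(1) b]] .
    then have "lincomb W e k \<in> B"
      unfolding W_eq using v(2) B submodule_diff by blast
    then have "W = (\<lambda>_. 0)"
      using e(2) W unfolding independent_mod_def by blast
    then have "x - lincomb v b m = x - lincomb v g m"
      using W_eq by simp
    then show "\<exists>v\<in>ZS_pow \<Sigma> m. x - lincomb v b m \<in> C"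
      using v by metis
  qed
  with b show ?thesis by blast
qed

lemma saturation_cyclic_mod:
  assumes C: "submodule C" "saturated C"
    and g: "spans_mod C m g UNIV"
    and e: "spans_mod (saturation C h) k e UNIV" "independent_mod (saturation C h) k e"
  shows "\<exists>e0\<in>saturation C h. \<forall>x\<in>saturation C h. \<exists>w\<in>ZS \<Sigma>. x - smul w e0 \<in> C"
proof -
  let ?B = "saturation C h"
  obtain b where b: "\<forall>i<m. b i \<in> ?B" "spans_mod C m b ?B"
    using spans_mod_complement[OF C(1) submodule_saturation[OF C(1)] subset_saturation[OF C(1)] g e]
    by blast
  then obtain e0 t where e0: "e0 \<in> ?B" "\<And>i. i < m \<Longrightarrow> b i - zmul (t i) e0 \<in> C"
    using saturation_finite_cyclic[OF C, of m b] by blast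
  have "\<exists>w\<in>ZS \<Sigma>. x - smul w e0 \<in> C" if x: "x \<in> ?B" for x
  proof -
    obtain v where v: "v \<in> ZS_pow \<Sigma> m" "x - lincomb v b m \<in> C"
      using b(2) x unfolding spans_mod_def by blast
    define w where "w = (\<Sum>i<m. v i * of_int (t i))"
    have "lincomb v (\<lambda>i. b i - zmul (t i) e0) m = lincomb v b m - smul w e0"
      using v(1) by (simp add: lincomb_diff_right lincomb_smul_const zmul_def w_def)
    moreover have "lincomb v (\<lambda>i. b i - zmul (t i) e0) m \<in> C"
      using C(1) v(1) e0(2) by (rule lincomb_in_submodule)
    ultimately have "(x - lincomb v b m) + (lincomb v b m - smul w e0) \<in> C"
      using submodule_add[OF C(1) v(2)] by metis
    moreover have "w \<in> ZS \<Sigma>"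
      using v(1) unfolding w_def ZS_pow_iff by (auto intro!: ZS_closed)
    ultimately show ?thesis by auto
  qed
  with e0(1) show ?thesis by blast
qed

lemma spans_mod_extend:
  assumes "spans_mod B k e UNIV" "\<forall>x\<in>B. \<exists>w\<in>ZS \<Sigma>. x - smul w e0 \<in> C"
  shows "spans_mod C (Suc k) (e(k := e0)) UNIV"
  unfolding spans_mod_def
proof
  fix x
  obtain v where v: "v \<in> ZS_pow \<Sigma> k" "x - lincomb v e k \<in> B"
    using assms(1) unfolding spans_mod_def by blast
  then obtain w where w: "w \<in> ZS \<Sigma>" "x - lincomb v e k - smul w e0 \<in> C"
    using assms(2) by blast
  have "v(k := w) \<in> ZS_pow \<Sigma> (Suc k)" using v(1) w(1) by (auto simp: ZS_pow_iff)
  moreover have "lincomb (v(k := w)) (e(k := e0)) (Suc k) = lincomb v e k + smul w e0"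
    by (simp add: lincomb_Suc lincomb_cong[of k "v(k := w)" v "e(k := e0)" e])
  ultimately show "\<exists>v\<in>ZS_pow \<Sigma> (Suc k). x - lincomb v (e(k := e0)) (Suc k) \<in> C"
    using w(2) by (metis diff_diff_eq)
qed

lemma independent_mod_extend:
  assumes C: "submodule C" "saturated C" and B: "submodule B" "C \<subseteq> B"
    and e: "independent_mod B k e" and e0: "e0 \<in> B" "e0 \<notin> C"
  shows "independent_mod C (Suc k) (e(k := e0))"
  unfolding independent_mod_def
proof (intro ballI impI)
  fix v assume v: "v \<in> ZS_pow \<Sigma> (Suc k)" and "lincomb v (e(k := e0)) (Suc k) \<in> C"
  moreover have "lincomb v (e(k := e0)) (Suc k) = lincomb (v(k := 0)) e k + smul (v k) e0"
    by (simp add: lincomb_Suc lincomb_cong[of k v "v(k := 0)" "e(k := e0)" e])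
  ultimately have in_C: "lincomb (v(k := 0)) e k + smul (v k) e0 \<in> C" by simp
  have vk: "v(k := 0) \<in> ZS_pow \<Sigma> k" "v k \<in> ZS \<Sigma>" using v by (auto simp: ZS_pow_iff)
  have "lincomb (v(k := 0)) e k + smul (v k) e0 - smul (v k) e0 \<in> B"
    using in_C B vk(2) e0(1) by (intro submodule_diff submodule_smul) auto
  then have "v(k := 0) = (\<lambda>_. 0)"
    using e vk(1) unfolding independent_mod_def by simp
  then have "smul (v k) e0 \<in> C" using in_C by simp
  then have "v k = 0" using saturated_smul_cancel[OF C vk(2)] e0(2) by blast
  with \<open>v(k := 0) = (\<lambda>_. 0)\<close> show "v = (\<lambda>_. 0)"
    by (metis fun_upd_idem_iff fun_upd_triv)
qed

theorem saturated_finite_quotient_free: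
  assumes "submodule C" "saturated C" "spans_mod C m g UNIV"
  shows "\<exists>k e. spans_mod C k e UNIV \<and> independent_mod C k e"
  using assms
proof (induction m arbitrary: C)
  case 0
  then have "spans_mod C 0 g UNIV \<and> independent_mod C 0 g"
    by (simp add: independent_mod_def ZS_pow_0)
  then show ?case by blast
next
  case (Suc m)
  define B where "B = saturation C (g m)"
  have B: "submodule B" "saturated B" "C \<subseteq> B" "g m \<in> B"
    unfolding B_def using Suc.prems(1)
    by (simp_all add: submodule_saturation saturated_saturation subset_saturation generator_in_saturation)
  then have "spans_mod B m g UNIV"
    using spans_mod_drop_last Suc.prems(3) by blast
  then obtain k e where e: "spans_mod B k e UNIV" "independent_mod B k e"
    using Suc.IH B(1,2) by blast
  then obtain e0 where e0: "e0 \<in> B" "\<forall>x\<in>B. \<exists>w\<in>ZS \<Sigma>. x - smul w e0 \<in> C"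
    using saturation_cyclic_mod[OF Suc.prems] unfolding B_def by blast
  show ?case
  proof (cases "e0 \<in> C")
    case True
    have "B \<subseteq> C"
    proof
      fix x assume "x \<in> B"
      then obtain w where "w \<in> ZS \<Sigma>" "x - smul w e0 \<in> C" using e0(2) by blast
      then have "(x - smul w e0) + smul w e0 \<in> C"
        using True Suc.prems(1) by (intro submodule_add submodule_smul)
      then show "x \<in> C" by simp
    qed
    with B(3) have "B = C" by blast
    with e show ?thesis by blast
  next
    case False
    then show ?thesis
      using spans_mod_extend[OF e(1) e0(2)] independent_mod_extend[OF Suc.prems(1,2) B(1,3) e(2) e0(1)]
      by blast
  qed
qed

end

section \<open>Topological \<open>\<int>[S\<inverse>]\<close>-modules\<close>

lemma compact_closure_subset:
  fixes A :: "'a::t2_space set"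
  shows "A \<subseteq> K \<Longrightarrow> compact K \<Longrightarrow> compact (closure A)"
  by (metis closure_minimal compact_Int_closed compact_imp_closed closed_closure inf.absorb_iff2)

locale ZS_top_module = ZS_module \<Sigma> smul
  for \<Sigma> and smul :: "rat \<Rightarrow> 'm::{ab_group_add,t2_space} \<Rightarrow> 'm" +
  assumes continuous_add: "continuous_on UNIV (\<lambda>p::'m \<times> 'm. fst p + snd p)"
begin

lemma continuous_map_add_fun:
  fixes f g :: "'a \<Rightarrow> 'm"
  assumes "continuous_map X euclidean f" "continuous_map X euclidean g"
  shows "continuous_map X euclidean (\<lambda>x. f x + g x)"
proof -
  have "continuous_map X (prod_topology euclidean euclidean) (\<lambda>x. (f x, g x))"
    using assms by (rule continuous_map_pairedI)
  moreover have "continuous_map (prod_topology euclidean euclidean) euclidean (\<lambda>p::'m \<times> 'm. fst p + snd p)"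
    using continuous_add by simp
  ultimately have "continuous_map X euclidean ((\<lambda>p. fst p + snd p) \<circ> (\<lambda>x. (f x, g x)))"
    by (rule continuous_map_compose)
  then show ?thesis by (simp add: o_def)
qed

lemma continuous_on_translation: "continuous_on UNIV (\<lambda>x::'m. a + x)"
  using continuous_map_add_fun[of euclidean "\<lambda>_. a" "\<lambda>x. x"] by simp

lemma open_translation_vimage: "open W \<Longrightarrow> open ((\<lambda>x::'m. a + x) -` W)"
  using continuous_on_translation open_vimage by blast

lemma open_translation:
  assumes "open W"
  shows "open ((\<lambda>x::'m. a + x) ` W)"
proof -
  have "(\<lambda>x. a + x) ` W = (\<lambda>x. - a + x) -` W"
    by (auto simp: image_iff algebra_simps intro!: bexI[of _ "- a + _"])
  then show ?thesis
    using open_translation_vimage[OF assms, of "- a"] by simp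
qed

lemma compact_translation: "compact K \<Longrightarrow> compact ((\<lambda>x::'m. a + x) ` K)"
  using compact_continuous_image continuous_on_subset[OF continuous_on_translation] by blast

lemma Cpart_iff: "x \<in> Cpart smul \<longleftrightarrow> compact (closure (range (\<lambda>n. zmul n x)))"
  unfolding Cpart_def zmul_def by simp

lemma subgroup_zmul:
  assumes "is_subgroup G" "x \<in> G"
  shows "zmul n x \<in> G"
proof (induction n rule: int_induct[where k = 0])
  case base
  then show ?case using assms(1) by (simp add: is_subgroup_def)
next
  case (step1 i)
  then show ?case using assms by (simp add: zmul_add_left is_subgroup_def)
next
  case (step2 i)
  have "zmul (i - 1) x = zmul i x + - x" by (simp add: zmul_diff_left)
  with step2 assms show ?case unfolding is_subgroup_def by metis
qed

lemma compact_subgroup_subset_Cpart: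
  assumes "compact U" "is_subgroup U"
  shows "U \<subseteq> Cpart smul"
  by (auto simp: Cpart_iff intro!: compact_closure_subset[OF _ assms(1)] subgroup_zmul[OF assms(2)])

lemma zero_in_Cpart: "0 \<in> Cpart smul"
proof -
  have "range (\<lambda>n. zmul n (0::'m)) = {0}" by auto
  then show ?thesis by (simp add: Cpart_iff)
qed

lemma Cpart_add:
  assumes "x \<in> Cpart smul" "y \<in> Cpart smul"
  shows "x + y \<in> Cpart smul"
proof -
  let ?K = "(\<lambda>p. fst p + snd p) ` (closure (range (\<lambda>n. zmul n x)) \<times> closure (range (\<lambda>n. zmul n y)))"
  have "compact ?K"
    using assms unfolding Cpart_iff
    by (intro compact_continuous_image continuous_on_subset[OF continuous_add] compact_Times) auto
  moreover have "range (\<lambda>n. zmul n (x + y)) \<subseteq> ?K"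
  proof
    fix z assume "z \<in> range (\<lambda>n. zmul n (x + y))"
    then obtain n where "z = fst (zmul n x, zmul n y) + snd (zmul n x, zmul n y)"
      by (auto simp: zmul_add_right)
    moreover have "(zmul n x, zmul n y) \<in> closure (range (\<lambda>n. zmul n x)) \<times> closure (range (\<lambda>n. zmul n y))"
      by (auto intro: closure_subset[THEN subsetD])
    ultimately show "z \<in> ?K" by blast
  qed
  ultimately show ?thesis
    unfolding Cpart_iff using compact_closure_subset by blast
qed

lemma Cpart_zmul:
  assumes "x \<in> Cpart smul"
  shows "zmul a x \<in> Cpart smul"
proof -
  have "range (\<lambda>n. zmul n (zmul a x)) \<subseteq> closure (range (\<lambda>n. zmul n x))"
    by (auto simp: zmul_zmul intro!: closure_subset[THEN subsetD])
  then show ?thesis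
    using assms compact_closure_subset unfolding Cpart_iff by blast
qed

lemma saturated_Cpart: "saturated (Cpart smul)"
  unfolding saturated_def
proof (intro allI impI)
  fix n x assume "n \<noteq> 0" "zmul n x \<in> Cpart smul"
  define N where "N = \<bar>n\<bar>"
  have "N = sgn n * n" by (simp add: N_def abs_sgn mult.commute)
  then have N: "0 < N" "zmul N x \<in> Cpart smul"
    using \<open>n \<noteq> 0\<close> Cpart_zmul[OF \<open>zmul n x \<in> Cpart smul\<close>, of "sgn n"]
    by (simp_all add: N_def zmul_zmul)
  let ?K = "\<Union>j\<in>{0..<N}. (\<lambda>z. zmul j x + z) ` closure (range (\<lambda>n. zmul n (zmul N x)))"
  have "compact ?K"
    using N(2) unfolding Cpart_iff by (intro compact_UN compact_translation) auto
  moreover have "range (\<lambda>n. zmul n x) \<subseteq> ?K"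
  proof
    fix z assume "z \<in> range (\<lambda>n. zmul n x)"
    then obtain t where t: "z = zmul t x" by auto
    have "zmul t x = zmul (t mod N + t div N * N) x"
      by simp
    also have "\<dots> = zmul (t mod N) x + zmul (t div N) (zmul N x)"
      by (simp only: zmul_zmul zmul_add_left)
    finally have "zmul t x = zmul (t mod N) x + zmul (t div N) (zmul N x)" .
    moreover have "zmul (t div N) (zmul N x) \<in> closure (range (\<lambda>n. zmul n (zmul N x)))"
      by (auto intro: closure_subset[THEN subsetD])
    moreover have "t mod N \<in> {0..<N}" using N(1) by simp
    ultimately show "z \<in> ?K" using t by blast
  qed
  ultimately show "x \<in> Cpart smul"
    unfolding Cpart_iff using compact_closure_subset by blast
qed

lemma submodule_Cpart: "submodule (Cpart smul)"
proof (rule submoduleI)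
  fix q x assume q: "q \<in> ZS \<Sigma>" and x: "x \<in> Cpart smul"
  obtain s a :: int where s: "0 < s" "of_int s * q = of_int a"
    using ZS_clear_denominator q zero_notin_\<Sigma> by metis
  then have "zmul s (smul q x) = zmul a x"
    using q by (simp add: zmul_def smul_smul)
  then have "zmul s (smul q x) \<in> Cpart smul"
    using Cpart_zmul[OF x, of a] by simp
  then show "smul q x \<in> Cpart smul"
    using saturatedD[OF saturated_Cpart] s(1) by (metis less_irrefl)
qed (use zero_in_Cpart Cpart_add in auto)

lemma open_Cpart:
  fixes U :: "'m set"
  assumes "compact U" "open U" "is_subgroup U"
  shows "open (Cpart smul)"
proof -
  have U: "0 \<in> U" "U \<subseteq> Cpart smul"
    using assms compact_subgroup_subset_Cpart unfolding is_subgroup_def by auto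
  have "Cpart smul = (\<Union>c\<in>Cpart smul. (\<lambda>x. c + x) ` U)"
  proof
    show "Cpart smul \<subseteq> (\<Union>c\<in>Cpart smul. (\<lambda>x. c + x) ` U)"
    proof
      fix c assume "c \<in> Cpart smul"
      moreover have "c \<in> (\<lambda>x. c + x) ` U" using U(1) by (auto intro: image_eqI[where x = 0])
      ultimately show "c \<in> (\<Union>c\<in>Cpart smul. (\<lambda>x. c + x) ` U)" by blast
    qed
    show "(\<Union>c\<in>Cpart smul. (\<lambda>x. c + x) ` U) \<subseteq> Cpart smul"
      using U(2) Cpart_add by auto
  qed
  moreover have "open (\<Union>c\<in>Cpart smul. (\<lambda>x. c + x) ` U)"
    using open_translation assms(2) by blast
  ultimately show ?thesis by simp
qed

lemma open_submodule_spans_mod: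
  assumes C: "submodule C" "open C"
    and K: "compact K" "gen_submodule \<Sigma> smul K = UNIV"
  shows "\<exists>m g. spans_mod C m g UNIV"
proof -
  obtain F where F: "F \<subseteq> K" "finite F" "K \<subseteq> (\<Union>x\<in>F. (\<lambda>c. x + c) ` C)"
  proof (rule compactE_image[OF K(1), of K "\<lambda>x. (\<lambda>c. x + c) ` C"])
    show "open ((\<lambda>c. x + c) ` C)" for x
      using open_translation[OF C(2)] .
    show "K \<subseteq> (\<Union>x\<in>K. (\<lambda>c. x + c) ` C)"
      using submodule_zero[OF C(1)] by force
  qed
  obtain m :: nat and g where g: "F = g ` {i. i < m}"
    using finite_imp_nat_seg_image_inj_on[OF F(2)] by blast
  let ?S = "{x. \<exists>v\<in>ZS_pow \<Sigma> m. x - lincomb v g m \<in> C}"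
  have "K \<subseteq> ?S"
  proof
    fix x assume "x \<in> K"
    then obtain j c where j: "j < m" "c \<in> C" "x = g j + c"
      using F(3) g by auto
    define v where "v = (\<lambda>i. if i = j then 1 else 0 :: rat)"
    have "lincomb v g m = (\<Sum>i<m. if i = j then g i else 0)"
      unfolding lincomb_def v_def by (intro sum.cong) auto
    also have "\<dots> = g j" using j(1) by simp
    finally have "x - lincomb v g m \<in> C" using j by simp
    moreover have "v \<in> ZS_pow \<Sigma> m" using j(1) by (auto simp: v_def ZS_pow_iff)
    ultimately show "x \<in> ?S" by blast
  qed
  then have "gen_submodule \<Sigma> smul K \<subseteq> ?S"
    using submodule_span_mod[OF C(1)] unfolding gen_submodule_def by blast
  then show ?thesis
    using K(2) unfolding spans_mod_def by blast
qed

end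

subsection \<open>Splitting off a free quotient by an open submodule\<close>

locale open_free_quotient = ZS_top_module \<Sigma> smul
  for \<Sigma> and smul :: "rat \<Rightarrow> 'm::{ab_group_add,t2_space} \<Rightarrow> 'm" +
  fixes C :: "'m set" and k :: nat and e :: "nat \<Rightarrow> 'm"
  assumes submodule_C: "is_submodule \<Sigma> smul C" and open_C: "open C"
    and spans_C: "spans_mod C k e UNIV" and independent_C: "independent_mod C k e"
begin

definition coords :: "'m \<Rightarrow> nat \<Rightarrow> rat" where
  "coords x = (THE v. v \<in> ZS_pow \<Sigma> k \<and> x - lincomb v e k \<in> C)"

definition decompose :: "'m \<Rightarrow> (nat \<Rightarrow> rat) \<times> 'm" where
  "decompose x = (coords x, x - lincomb (coords x) e k)"

lemma coords_eqI: "v \<in> ZS_pow \<Sigma> k \<Longrightarrow> x - lincomb v e k \<in> C \<Longrightarrow> coords x = v"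
  unfolding coords_def
  by (rule the_equality) (use independent_mod_unique[OF submodule_C independent_C] in blast)+

lemma coords: "coords x \<in> ZS_pow \<Sigma> k" "x - lincomb (coords x) e k \<in> C"
proof -
  obtain v where "v \<in> ZS_pow \<Sigma> k" "x - lincomb v e k \<in> C"
    using spans_C unfolding spans_mod_def by blast
  with coords_eqI show "coords x \<in> ZS_pow \<Sigma> k" "x - lincomb (coords x) e k \<in> C"
    by auto
qed

lemma coords_add: "coords (x + y) = (\<lambda>i. coords x i + coords y i)"
proof (rule coords_eqI)
  show "(\<lambda>i. coords x i + coords y i) \<in> ZS_pow \<Sigma> k"
    using coords by blast
  have "x + y - lincomb (\<lambda>i. coords x i + coords y i) e k =
      (x - lincomb (coords x) e k) + (y - lincomb (coords y) e k)"
    using coords by (simp add: lincomb_add)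
  then show "x + y - lincomb (\<lambda>i. coords x i + coords y i) e k \<in> C"
    using submodule_add[OF submodule_C coords(2) coords(2)] by metis
qed

lemma coords_smul: "q \<in> ZS \<Sigma> \<Longrightarrow> coords (smul q x) = (\<lambda>i. q * coords x i)"
proof (rule coords_eqI)
  assume q: "q \<in> ZS \<Sigma>"
  then show "(\<lambda>i. q * coords x i) \<in> ZS_pow \<Sigma> k"
    using coords by blast
  have "smul q x - lincomb (\<lambda>i. q * coords x i) e k = smul q (x - lincomb (coords x) e k)"
    using q coords by (simp add: lincomb_smul smul_diff_right)
  then show "smul q x - lincomb (\<lambda>i. q * coords x i) e k \<in> C"
    using submodule_smul[OF submodule_C q coords(2)] by metis
qed

lemma decompose_add:
  "decompose (x + y) = ((\<lambda>i. fst (decompose x) i + fst (decompose y) i), snd (decompose x) + snd (decompose y))"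
  using coords by (simp add: decompose_def coords_add lincomb_add)

lemma decompose_smul:
  "q \<in> ZS \<Sigma> \<Longrightarrow> decompose (smul q x) = ((\<lambda>i. q * fst (decompose x) i), smul q (snd (decompose x)))"
  using coords by (simp add: decompose_def coords_smul lincomb_smul smul_diff_right)

lemma open_coords_fibre:
  assumes "v \<in> ZS_pow \<Sigma> k"
  shows "open {x. coords x = v}"
proof -
  have "{x. coords x = v} = (\<lambda>c. lincomb v e k + c) ` C"
  proof
    show "{x. coords x = v} \<subseteq> (\<lambda>c. lincomb v e k + c) ` C"
      using coords(2) by (force intro: image_eqI[where x = "_ - lincomb v e k"])
    show "(\<lambda>c. lincomb v e k + c) ` C \<subseteq> {x. coords x = v}"
      using coords_eqI[OF assms] by auto
  qed
  then show ?thesis using open_translation[OF open_C] by simp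
qed

lemma continuous_map_coords: "continuous_map euclidean (discrete_topology (ZS_pow \<Sigma> k)) coords"
  unfolding continuous_map
proof (intro conjI allI impI)
  show "coords ` topspace euclidean \<subseteq> topspace (discrete_topology (ZS_pow \<Sigma> k))"
    using coords by auto
  fix W assume "openin (discrete_topology (ZS_pow \<Sigma> k)) W"
  then have "open (\<Union>v\<in>W. {x. coords x = v})"
    using open_coords_fibre by auto
  moreover have "{x \<in> topspace euclidean. coords x \<in> W} = (\<Union>v\<in>W. {x. coords x = v})"
    by auto
  ultimately show "openin euclidean {x \<in> topspace euclidean. coords x \<in> W}"
    by simp
qed

definition recompose :: "(nat \<Rightarrow> rat) \<times> 'm \<Rightarrow> 'm" where
  "recompose p = lincomb (fst p) e k + snd p"

lemma recompose_decompose: "recompose (decompose x) = x"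
  by (simp add: recompose_def decompose_def)

lemma decompose_recompose: "v \<in> ZS_pow \<Sigma> k \<Longrightarrow> c \<in> C \<Longrightarrow> decompose (recompose (v, c)) = (v, c)"
  using coords_eqI[of v "lincomb v e k + c"] by (simp add: recompose_def decompose_def)

lemma continuous_map_decompose:
  "continuous_map euclidean (prod_topology (discrete_topology (ZS_pow \<Sigma> k)) (top_of_set C)) decompose"
proof -
  have "continuous_map euclidean euclidean (\<lambda>x. x + (- lincomb (coords x) e k))"
    using continuous_map_compose[OF continuous_map_coords, where X'' = euclidean and g = "\<lambda>v. - lincomb v e k"]
    by (intro continuous_map_add_fun) (simp_all add: o_def)
  then have "continuous_map euclidean (top_of_set C) (snd \<circ> decompose)"
    using coords(2) by (simp add: continuous_map_in_subtopology decompose_def o_def)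
  moreover have "fst \<circ> decompose = coords"
    by (simp add: decompose_def o_def)
  ultimately show ?thesis
    using continuous_map_coords by (simp add: continuous_map_pairwise)
qed

lemma continuous_map_recompose:
  "continuous_map (prod_topology (discrete_topology (ZS_pow \<Sigma> k)) (top_of_set C)) euclidean recompose"
  unfolding recompose_def
proof (rule continuous_map_add_fun)
  show "continuous_map (prod_topology (discrete_topology (ZS_pow \<Sigma> k)) (top_of_set C)) euclidean
      (\<lambda>p. lincomb (fst p) e k)"
    by (rule continuous_map_compose[OF continuous_map_fst, where g = "\<lambda>v. lincomb v e k",
          unfolded o_def]) simp
  show "continuous_map (prod_topology (discrete_topology (ZS_pow \<Sigma> k)) (top_of_set C)) euclidean snd"
    using continuous_map_into_fulltopology[OF continuous_map_snd] .
qed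

lemma homeomorphic_map_decompose:
  "homeomorphic_map euclidean (prod_topology (discrete_topology (ZS_pow \<Sigma> k)) (top_of_set C)) decompose"
proof -
  have "homeomorphic_maps euclidean (prod_topology (discrete_topology (ZS_pow \<Sigma> k)) (top_of_set C))
      decompose recompose"
    unfolding homeomorphic_maps_def
    using continuous_map_decompose continuous_map_recompose recompose_decompose decompose_recompose
    by auto
  then show ?thesis
    using homeomorphic_map_maps by blast
qed

end

theorem mainTheorem12:
  fixes \<Sigma> :: "nat set"
    and smul :: "rat \<Rightarrow> 'm::{ab_group_add,t2_space} \<Rightarrow> 'm"
  assumes "\<forall>p\<in>\<Sigma>. prime p"
    and "top_ZS_module \<Sigma> smul"
    and "locally_compact_space (euclidean :: 'm topology)"
    and "\<exists>U::'m set. compact U \<and> open U \<and> is_subgroup U"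
    and "compactly_generated \<Sigma> smul"
  shows "\<exists>(k::nat) (f :: 'm \<Rightarrow> (nat \<Rightarrow> rat) \<times> 'm).
           homeomorphic_map euclidean
             (prod_topology (discrete_topology (ZS_pow \<Sigma> k)) (top_of_set (Cpart smul))) f \<and>
           (\<forall>x y. f (x + y) = ((\<lambda>i. fst (f x) i + fst (f y) i), snd (f x) + snd (f y))) \<and>
           (\<forall>q\<in>ZS \<Sigma>. \<forall>x. f (smul q x) = ((\<lambda>i. q * fst (f x) i), smul q (snd (f x))))"
proof -
  interpret ZS_top_module \<Sigma> smul
    using assms(1,2) unfolding top_ZS_module_def by unfold_locales auto
  obtain U :: "'m set" where U: "compact U" "open U" "is_subgroup U"
    using assms(4) by blast
  obtain K where K: "compact K" "gen_submodule \<Sigma> smul K = UNIV"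
    using assms(5) unfolding compactly_generated_def by blast
  obtain m g where "spans_mod (Cpart smul) m g UNIV"
    using open_submodule_spans_mod[OF submodule_Cpart open_Cpart[OF U] K] by blast
  then obtain k e where "spans_mod (Cpart smul) k e UNIV" "independent_mod (Cpart smul) k e"
    using saturated_finite_quotient_free[OF submodule_Cpart saturated_Cpart] by blast
  then interpret open_free_quotient \<Sigma> smul "Cpart smul" k e
    using submodule_Cpart open_Cpart[OF U] by unfold_locales
  show ?thesis
    using homeomorphic_map_decompose decompose_add decompose_smul by blast
qed

end
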